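(* Let $\Sigma$ be a finite alphabet and $\Sigma^*$ the set of finite strings over $\Sigma$. Let $p$ and $q$ be probability distributions on $\Sigma^*$ with $p \ll q$ (i.e. $q(x)=0 \Rightarrow p(x)=0$). Let $X^{(1)},\dots,X^{(N)}$ be i.i.d. with law $q$, let $W \coloneqq p(X)/q(X)$ for $X\sim q$, and assume $\mathbb{E}_q[W^4]<\infty$. Define the importance resampling distribution $$\widehat{p}_N(x) \coloneqq \sum_{n=1}^N \frac{w^{(n)}}{\sum_{m=1}^N w^{(m)}}\,\mathbf{1}\{X^{(n)}=x\},\qquad w^{(n)} \coloneqq \frac{p(X^{(n)})}{q(X^{(n)})},$$ let $\overline{p}_N \coloneqq \mathbb{E}[\widehat{p}_N]$ (expectation over the samples), and let $\chi^2(p\|q)\coloneqq \mathbb{E}_q[(W-1)^2]$. Then, as $N\to\infty$: 1. $\|\overline{p}_N - p\|_1 = O\!\left(\sqrt{(1+\chi^2(p\|q))/N}\right)$; 2. $\|\overline{p}_N - p\|_2^2 = O\!\left((1+\chi^2(p\|q))/N\right)$; 3. $\mathbb{E}\big[\|\widehat{p}_N - p\|_2^2\big] = O\!\left((1+\chi^2(p\|q))/N\right)$.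
   Context: Norms are over functions on $\Sigma^*$: $\|f\|_1=\sum_{x\in\Sigma^*}|f(x)|$, $\|f\|_2^2=\sum_{x\in\Sigma^*} f(x)^2$. $\widehat{p}_N$ is a random probability distribution on $\Sigma^*$ (almost surely well-defined since the weights are positive with probability one on the support of $p$... more precisely the normalizer $\sum_m w^{(m)}$ is a.s. positive when needed). *)

theory Defs
  imports "HOL-Probability.Probability" "HOL-Library.Landau_Symbols"
begin

text \<open>Strings over a finite alphabet 'a are 'a list; distributions on strings are 'a list pmf.\<close>

definition abs_cont :: "'b pmf \<Rightarrow> 'b pmf \<Rightarrow> bool" where
  "abs_cont p q \<longleftrightarrow> (\<forall>x. pmf q x = 0 \<longrightarrow> pmf p x = 0)"

definition imp_weight :: "'b pmf \<Rightarrow> 'b pmf \<Rightarrow> 'b \<Rightarrow> real" where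
  "imp_weight p q x = pmf p x / pmf q x"

definition chi2 :: "'b pmf \<Rightarrow> 'b pmf \<Rightarrow> real" where
  "chi2 p q = measure_pmf.expectation q (\<lambda>x. (imp_weight p q x - 1)^2)"

text \<open>Importance resampling distribution from samples xs = [X1,...,XN]
  (with the HOL convention t/0 = 0 on the null event where all weights vanish).\<close>
definition hat_p :: "'b pmf \<Rightarrow> 'b pmf \<Rightarrow> 'b list \<Rightarrow> 'b \<Rightarrow> real" where
  "hat_p p q xs x =
     (\<Sum>n<length xs. imp_weight p q (xs ! n) / (\<Sum>m<length xs. imp_weight p q (xs ! m))
        * (if xs ! n = x then 1 else 0))"

definition bar_p :: "'b pmf \<Rightarrow> 'b pmf \<Rightarrow> nat \<Rightarrow> 'b \<Rightarrow> real" where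
  "bar_p p q N x = measure_pmf.expectation (replicate_pmf N q) (\<lambda>xs. hat_p p q xs x)"

definition norm1 :: "('b \<Rightarrow> real) \<Rightarrow> real" where
  "norm1 f = (\<Sum>\<^sub>\<infinity>x. \<bar>f x\<bar>)"

definition norm2sq :: "('b \<Rightarrow> real) \<Rightarrow> real" where
  "norm2sq f = (\<Sum>\<^sub>\<infinity>x. (f x)^2)"

end

(*
  Write S = sum_n w(X_n) and C_x = sum_n w(X_n) [X_n = x], so that hat_p_N(x) = C_x / S.
  Since E w(X) = 1, E w(X)^2 = 1 + chi2 and E C_x = N p(x), independence of the samples gives
  E (1 - S/N)^2 = chi2/N and E (C_x/N - p(x))^2 <= p(x) w(x) / N.

  Everything rests on the identity hat_p_N(x) - C_x/N = hat_p_N(x) (1 - S/N). Taking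
  expectations, |bar_p_N(x) - p(x)| <= E [hat_p_N(x) |1 - S/N|]; summing over x, as hat_p_N has
  total mass at most 1, gives ||bar_p_N - p||_1 <= E |1 - S/N| <= sqrt (chi2/N), and the squared
  2-norm is at most the squared 1-norm. For the fluctuations,
  (hat_p_N(x) - p(x))^2 <= 2 (1 - S/N)^2 hat_p_N(x) + 2 (C_x/N - p(x))^2, and summing over x
  gives E ||hat_p_N - p||_2^2 <= 2 chi2/N + 2 (1 + chi2)/N.
*)

theory Submission
  imports Defs
begin

lemma has_bochner_integral_measure_pmf_const:
  "has_bochner_integral (measure_pmf M) (\<lambda>_. c) (c :: real)"
  by (simp add: has_bochner_integral_iff)

lemma has_bochner_integral_nonneg:
  fixes f :: "'a \<Rightarrow> real"
  assumes "has_bochner_integral M f x" and "\<And>y. f y \<ge> 0"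
  shows "x \<ge> 0"
  using assms by (auto simp: has_bochner_integral_iff)

lemma nn_integral_eq_if_has_bochner_integral:
  fixes f :: "'a \<Rightarrow> real"
  assumes "has_bochner_integral M f x" and "\<And>y. f y \<ge> 0"
  shows "(\<integral>\<^sup>+y. f y \<partial>M) = ennreal x"
  using assms by (auto simp: has_bochner_integral_iff nn_integral_eq_integral)

lemma has_bochner_integral_replicate_pmf_Suc:
  fixes h :: "'a list \<Rightarrow> real"
  assumes h_nonneg: "\<And>xs. h xs \<ge> 0"
    and tail: "\<And>x. has_bochner_integral (replicate_pmf N q) (\<lambda>xs. h (x # xs)) (g x)"
    and head: "has_bochner_integral q g c"
  shows "has_bochner_integral (replicate_pmf (Suc N) q) h c"
proof (rule has_bochner_integral_nn_integral)
  have g_nonneg: "g x \<ge> 0" for x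
    using tail h_nonneg by (rule has_bochner_integral_nonneg)
  then show "0 \<le> c"
    using head by (rule has_bochner_integral_nonneg[rotated])
  have "(\<integral>\<^sup>+xs. h xs \<partial>replicate_pmf (Suc N) q)
      = (\<integral>\<^sup>+x. \<integral>\<^sup>+xs. h (x # xs) \<partial>replicate_pmf N q \<partial>q)"
    by (simp add: nn_integral_return)
  also have "\<dots> = (\<integral>\<^sup>+x. g x \<partial>q)"
    by (intro nn_integral_cong nn_integral_eq_if_has_bochner_integral tail h_nonneg)
  also have "\<dots> = c"
    using head g_nonneg by (rule nn_integral_eq_if_has_bochner_integral)
  finally show "(\<integral>\<^sup>+xs. h xs \<partial>replicate_pmf (Suc N) q) = ennreal c" .
qed (use h_nonneg in auto)

lemma has_bochner_integral_sum_list_replicate_pmf: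
  fixes f :: "'a \<Rightarrow> real" and q :: "'a pmf"
  assumes "\<And>x. f x \<ge> 0" and "has_bochner_integral q f m"
  shows "has_bochner_integral (replicate_pmf N q) (\<lambda>xs. sum_list (map f xs)) (real N * m)"
proof (induction N)
  case 0
  show ?case by (simp add: has_bochner_integral_iff integrable_measure_pmf_finite)
next
  case (Suc N)
  show ?case
  proof (rule has_bochner_integral_replicate_pmf_Suc)
    show "has_bochner_integral (replicate_pmf N q) (\<lambda>xs. sum_list (map f (x # xs)))
        (f x + real N * m)" for x
      using has_bochner_integral_add[OF has_bochner_integral_measure_pmf_const Suc.IH] by simp
    show "has_bochner_integral q (\<lambda>x. f x + real N * m) (real (Suc N) * m)"
      using has_bochner_integral_add[OF assms(2) has_bochner_integral_measure_pmf_const[of q "real N * m"]]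
      by (simp add: algebra_simps)
  qed (use assms(1) in \<open>auto intro!: sum_list_nonneg\<close>)
qed

lemma has_bochner_integral_sum_list_sq_replicate_pmf:
  fixes f :: "'a \<Rightarrow> real" and q :: "'a pmf"
  assumes f_nonneg: "\<And>x. f x \<ge> 0"
    and mean: "has_bochner_integral q f m"
    and second: "has_bochner_integral q (\<lambda>x. (f x)^2) v"
  shows "has_bochner_integral (replicate_pmf N q) (\<lambda>xs. (sum_list (map f xs))^2)
           (real N * v + real N * (real N - 1) * m^2)"
proof (induction N)
  case 0
  show ?case by (simp add: has_bochner_integral_iff integrable_measure_pmf_finite)
next
  case (Suc N)
  let ?S = "\<lambda>xs. sum_list (map f xs)"
  let ?V = "real N * v + real N * (real N - 1) * m^2"
  show ?case
  proof (rule has_bochner_integral_replicate_pmf_Suc)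
    fix x
    have "has_bochner_integral (replicate_pmf N q) (\<lambda>xs. (f x)^2 + 2 * f x * ?S xs + (?S xs)^2)
            ((f x)^2 + 2 * f x * (real N * m) + ?V)"
      by (intro has_bochner_integral_add has_bochner_integral_mult_right Suc.IH f_nonneg mean
          has_bochner_integral_measure_pmf_const has_bochner_integral_sum_list_replicate_pmf)
    then show "has_bochner_integral (replicate_pmf N q) (\<lambda>xs. (?S (x # xs))^2)
            ((f x)^2 + 2 * f x * (real N * m) + ?V)"
      by (simp add: power2_sum add_ac)
  next
    have "has_bochner_integral q (\<lambda>x. (f x)^2 + 2 * (real N * m) * f x + ?V)
            (v + 2 * (real N * m) * m + ?V)"
      by (intro has_bochner_integral_add has_bochner_integral_mult_right
          has_bochner_integral_measure_pmf_const mean second)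
    then show "has_bochner_integral q (\<lambda>x. (f x)^2 + 2 * f x * (real N * m) + ?V)
            (real (Suc N) * v + real (Suc N) * (real (Suc N) - 1) * m^2)"
      by (simp add: algebra_simps power2_eq_square)
  qed simp
qed

lemma has_bochner_integral_affine_sq:
  fixes X :: "'a \<Rightarrow> real" and M :: "'a pmf"
  assumes "has_bochner_integral M X m" and "has_bochner_integral M (\<lambda>y. (X y)^2) v"
  shows "has_bochner_integral M (\<lambda>y. (a + b * X y)^2) (a^2 + 2 * a * b * m + b^2 * v)"
proof -
  have "has_bochner_integral M (\<lambda>y. a^2 + (2 * a * b) * X y + b^2 * (X y)^2)
          (a^2 + (2 * a * b) * m + b^2 * v)"
    using assms by (intro has_bochner_integral_add has_bochner_integral_mult_right
        has_bochner_integral_measure_pmf_const)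
  then show ?thesis
    by (simp add: power2_sum power_mult_distrib algebra_simps)
qed

lemma (in prob_space) expectation_abs_le_sqrt_second_moment:
  fixes X :: "'a \<Rightarrow> real"
  assumes "X \<in> borel_measurable M" and "integrable M (\<lambda>x. (X x)^2)"
  shows "expectation (\<lambda>x. \<bar>X x\<bar>) \<le> sqrt (expectation (\<lambda>x. (X x)^2))"
proof (rule real_le_rsqrt)
  have "integrable M X"
    using assms by (rule square_integrable_imp_integrable)
  then have "variance (\<lambda>x. \<bar>X x\<bar>) = expectation (\<lambda>x. (X x)^2) - (expectation (\<lambda>x. \<bar>X x\<bar>))^2"
    using assms(2) by (subst variance_eq) auto
  then show "(expectation (\<lambda>x. \<bar>X x\<bar>))^2 \<le> expectation (\<lambda>x. (X x)^2)"
    using variance_positive[of "\<lambda>x. \<bar>X x\<bar>"] by simp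
qed

lemma infsum_le_if_finite_sums_le:
  fixes g :: "'b \<Rightarrow> real"
  assumes "\<And>x. g x \<ge> 0" and "\<And>F. finite F \<Longrightarrow> sum g F \<le> B"
  shows "infsum g UNIV \<le> B"
proof (rule infsum_le_finite_sums)
  show "g summable_on UNIV"
    using assms by (intro nonneg_bdd_above_summable_on bdd_aboveI) auto
qed (use assms in auto)

lemma ennreal_infsum_le_nn_integral:
  fixes g :: "'a \<Rightarrow> real"
  assumes g_nonneg: "\<And>x. g x \<ge> 0"
  shows "ennreal (infsum g UNIV) \<le> (\<integral>\<^sup>+x. g x \<partial>count_space UNIV)"
proof (cases "g summable_on UNIV")
  case True
  have "ennreal (infsum g UNIV) = (SUP F\<in>{F. finite F \<and> F \<subseteq> UNIV}. ennreal (sum g F))"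
    using True g_nonneg by (rule infsum_nonneg_is_SUPREMUM_ennreal)
  also have "\<dots> \<le> (\<integral>\<^sup>+x. g x \<partial>count_space UNIV)"
  proof (rule SUP_least)
    fix F :: "'a set"
    assume "F \<in> {F. finite F \<and> F \<subseteq> UNIV}"
    then have "ennreal (sum g F) = (\<integral>\<^sup>+x. g x \<partial>count_space F)"
      using g_nonneg by (simp add: nn_integral_count_space_finite sum_ennreal)
    also have "\<dots> \<le> (\<integral>\<^sup>+x. g x \<partial>count_space UNIV)"
      by (simp add: nn_integral_count_space_indicator nn_integral_mono indicator_def)
    finally show "ennreal (sum g F) \<le> (\<integral>\<^sup>+x. g x \<partial>count_space UNIV)" .
  qed
  finally show ?thesis .
qed (simp add: infsum_not_exists)

lemma sum_power2_le_power2_sum_abs: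
  fixes f :: "'b \<Rightarrow> real"
  assumes "finite F"
  shows "(\<Sum>x\<in>F. (f x)^2) \<le> (\<Sum>x\<in>F. \<bar>f x\<bar>)^2"
  using assms
proof (induction F rule: finite_induct)
  case (insert a F)
  have "(\<Sum>x\<in>insert a F. \<bar>f x\<bar>)^2
      = (f a)^2 + 2 * \<bar>f a\<bar> * (\<Sum>x\<in>F. \<bar>f x\<bar>) + (\<Sum>x\<in>F. \<bar>f x\<bar>)^2"
    using insert.hyps by (simp add: power2_sum)
  moreover have "0 \<le> 2 * \<bar>f a\<bar> * (\<Sum>x\<in>F. \<bar>f x\<bar>)"
    by (simp add: sum_nonneg)
  moreover have "(\<Sum>x\<in>insert a F. (f x)^2) = (f a)^2 + (\<Sum>x\<in>F. (f x)^2)"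
    using insert.hyps by simp
  ultimately show ?case
    using insert.IH by linarith
qed simp

lemma bigo_nat_if_bounded_for_pos:
  fixes f g :: "nat \<Rightarrow> real"
  assumes "\<And>N. N > 0 \<Longrightarrow> \<bar>f N\<bar> \<le> C * g N"
  shows "f \<in> O(g)"
proof (intro bigoI[where c = "\<bar>C\<bar>"] eventually_mono[OF eventually_gt_at_top[of 0]])
  fix N :: nat
  assume "N > 0"
  then have "\<bar>f N\<bar> \<le> C * g N"
    by (rule assms)
  also have "\<dots> \<le> \<bar>C\<bar> * \<bar>g N\<bar>"
    by (simp flip: abs_mult)
  finally show "norm (f N) \<le> \<bar>C\<bar> * norm (g N)"
    by simp
qed

lemma imp_weight_nonneg: "imp_weight p q x \<ge> 0"
  by (simp add: imp_weight_def)

lemma pmf_mult_imp_weight: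
  assumes "abs_cont p q"
  shows "pmf q x * imp_weight p q x = pmf p x"
  using assms by (cases "pmf q x = 0") (auto simp: abs_cont_def imp_weight_def)

lemma chi2_nonneg: "chi2 p q \<ge> 0"
  unfolding chi2_def by simp

lemma has_bochner_integral_imp_weight:
  assumes "abs_cont p q"
  shows "has_bochner_integral q (imp_weight p q) 1"
proof (rule has_bochner_integral_nn_integral)
  have "(\<integral>\<^sup>+x. imp_weight p q x \<partial>q) = (\<integral>\<^sup>+x. pmf p x \<partial>count_space UNIV)"
    by (simp add: nn_integral_measure_pmf pmf_mult_imp_weight[OF assms] imp_weight_nonneg
        flip: ennreal_mult)
  also have "\<dots> = 1"
    by (simp add: nn_integral_pmf measure_pmf.emeasure_space_1[simplified])
  finally show "(\<integral>\<^sup>+x. imp_weight p q x \<partial>q) = ennreal 1" by simp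
qed (auto simp: imp_weight_nonneg)

lemma has_bochner_integral_imp_weight_sq:
  assumes "abs_cont p q" and "integrable q (\<lambda>x. (imp_weight p q x)^2)"
  shows "has_bochner_integral q (\<lambda>x. (imp_weight p q x)^2) (1 + chi2 p q)"
proof -
  have w: "integrable q (imp_weight p q)" "measure_pmf.expectation q (imp_weight p q) = 1"
    using has_bochner_integral_imp_weight[OF assms(1)] by (auto simp: has_bochner_integral_iff)
  have "chi2 p q = measure_pmf.expectation q (\<lambda>x. (imp_weight p q x)^2 + 1 - 2 * imp_weight p q x)"
    unfolding chi2_def by (simp add: power2_diff)
  also have "\<dots> = measure_pmf.expectation q (\<lambda>x. (imp_weight p q x)^2) - 1"
    using w assms(2) by simp
  finally show ?thesis
    using assms(2) by (simp add: has_bochner_integral_iff)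
qed

lemma has_bochner_integral_mult_indicator_singleton:
  fixes g :: "'a \<Rightarrow> real"
  shows "has_bochner_integral (measure_pmf q) (\<lambda>y. g y * indicator {x} y) (pmf q x * g x)"
proof -
  have "(\<lambda>y. g y * indicator {x} y) = (\<lambda>y. indicator {x} y * g x)"
    by (auto simp: indicator_def)
  moreover have "has_bochner_integral q (\<lambda>y. indicator {x} y * g x) (measure q {x} * g x)"
    by (intro has_bochner_integral_mult_left has_bochner_integral_real_indicator)
      (auto simp: emeasure_pmf_single)
  ultimately show ?thesis
    by (simp add: measure_pmf_single)
qed

lemma has_bochner_integral_imp_weight_at:
  assumes "abs_cont p q"
  shows "has_bochner_integral q (\<lambda>y. imp_weight p q y * indicator {x} y) (pmf p x)"
  using has_bochner_integral_mult_indicator_singleton[of q "imp_weight p q" x]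
  by (simp add: pmf_mult_imp_weight[OF assms])

lemma has_bochner_integral_imp_weight_at_sq:
  assumes "abs_cont p q"
  shows "has_bochner_integral q (\<lambda>y. (imp_weight p q y * indicator {x} y)^2)
           (pmf p x * imp_weight p q x)"
proof -
  have "(\<lambda>y. (imp_weight p q y * indicator {x} y)^2) = (\<lambda>y. (imp_weight p q y)^2 * indicator {x} y)"
    by (auto simp: indicator_def)
  moreover have "pmf q x * (imp_weight p q x)^2 = pmf p x * imp_weight p q x"
    by (simp add: power2_eq_square pmf_mult_imp_weight[OF assms, symmetric])
  ultimately show ?thesis
    using has_bochner_integral_mult_indicator_singleton[of q "\<lambda>y. (imp_weight p q y)^2" x] by simp
qed

lemma nn_integral_pmf_mult_imp_weight:
  assumes ac: "abs_cont p q" and sq: "integrable q (\<lambda>x. (imp_weight p q x)^2)"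
  shows "(\<integral>\<^sup>+x. pmf p x * imp_weight p q x \<partial>count_space UNIV) = ennreal (1 + chi2 p q)"
proof -
  have "pmf p x * imp_weight p q x = pmf q x * (imp_weight p q x)^2" for x
    by (simp add: power2_eq_square pmf_mult_imp_weight[OF ac, symmetric])
  then have "(\<integral>\<^sup>+x. pmf p x * imp_weight p q x \<partial>count_space UNIV)
      = (\<integral>\<^sup>+x. (imp_weight p q x)^2 \<partial>q)"
    by (simp add: nn_integral_measure_pmf ennreal_mult)
  also have "\<dots> = ennreal (1 + chi2 p q)"
    by (intro nn_integral_eq_if_has_bochner_integral has_bochner_integral_imp_weight_sq[OF ac sq])
      simp
  finally show ?thesis .
qed

definition total_weight :: "'b pmf \<Rightarrow> 'b pmf \<Rightarrow> 'b list \<Rightarrow> real" where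
  "total_weight p q xs = sum_list (map (imp_weight p q) xs)"

definition weight_at :: "'b pmf \<Rightarrow> 'b pmf \<Rightarrow> 'b list \<Rightarrow> 'b \<Rightarrow> real" where
  "weight_at p q xs x = sum_list (map (\<lambda>y. imp_weight p q y * indicator {x} y) xs)"

lemma total_weight_nonneg: "total_weight p q xs \<ge> 0"
  unfolding total_weight_def by (auto intro!: sum_list_nonneg simp: imp_weight_nonneg)

lemma weight_at_nonneg: "weight_at p q xs x \<ge> 0"
  unfolding weight_at_def by (auto intro!: sum_list_nonneg simp: imp_weight_nonneg)

lemma hat_p_eq_weight_at_div_total_weight:
  "hat_p p q xs x = weight_at p q xs x / total_weight p q xs"
  unfolding hat_p_def weight_at_def total_weight_def sum_list_sum_nth atLeast0LessThan
    sum_divide_distrib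
  by (intro sum.cong) auto

lemma sum_weight_at_le_total_weight:
  assumes "finite F"
  shows "(\<Sum>x\<in>F. weight_at p q xs x) \<le> total_weight p q xs"
proof (induction xs)
  case Nil
  show ?case by (simp add: weight_at_def total_weight_def)
next
  case (Cons y ys)
  have "(\<Sum>x\<in>F. imp_weight p q y * indicator {x} y) = imp_weight p q y * indicator F y"
    using assms by (simp add: sum_distrib_left indicator_def)
  also have "\<dots> \<le> imp_weight p q y"
    by (simp add: imp_weight_nonneg indicator_def)
  finally show ?case
    using Cons.IH by (simp add: weight_at_def total_weight_def sum.distrib)
qed

(* When all weights vanish, hat_p is 0 by the convention t / 0 = 0, and so is weight_at. *)

lemma weight_at_eq_hat_p_mult_total_weight:
  "weight_at p q xs x = hat_p p q xs x * total_weight p q xs"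
proof (cases "total_weight p q xs = 0")
  case True
  then show ?thesis
    using sum_weight_at_le_total_weight[of "{x}" p q xs] weight_at_nonneg[of p q xs x] by simp
qed (simp add: hat_p_eq_weight_at_div_total_weight)

lemma hat_p_nonneg: "hat_p p q xs x \<ge> 0"
  by (simp add: hat_p_eq_weight_at_div_total_weight weight_at_nonneg total_weight_nonneg)

lemma sum_hat_p_le_1:
  assumes "finite F"
  shows "(\<Sum>x\<in>F. hat_p p q xs x) \<le> 1"
  using sum_weight_at_le_total_weight[OF assms, of p q xs] total_weight_nonneg[of p q xs]
  by (cases "total_weight p q xs = 0")
    (simp_all add: hat_p_eq_weight_at_div_total_weight divide_le_eq_1 flip: sum_divide_distrib)

lemma hat_p_le_1: "hat_p p q xs x \<le> 1"
  using sum_hat_p_le_1[of "{x}" p q xs] by simp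

lemma hat_p_eq_0_if_not_in_set:
  "x \<notin> set xs \<Longrightarrow> hat_p p q xs x = 0"
  by (simp add: hat_p_def in_set_conv_nth)

lemma integrable_hat_p: "integrable (measure_pmf M) (\<lambda>xs. hat_p p q xs x)"
  by (rule measure_pmf.integrable_const_bound[where B = 1]) (auto simp: hat_p_nonneg hat_p_le_1)

lemma nn_integral_hat_p_le_1:
  "(\<integral>\<^sup>+x. hat_p p q xs x \<partial>count_space UNIV) \<le> 1"
proof -
  have "(\<integral>\<^sup>+x. hat_p p q xs x \<partial>count_space UNIV) = (\<Sum>x\<in>set xs. ennreal (hat_p p q xs x))"
    by (rule nn_integral_count_space') (auto simp: hat_p_eq_0_if_not_in_set)
  also have "\<dots> \<le> 1"
    using sum_hat_p_le_1[of "set xs" p q xs] by (simp add: hat_p_nonneg)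
  finally show ?thesis .
qed

lemma norm1_nonneg: "norm1 f \<ge> 0"
  unfolding norm1_def by (rule infsum_nonneg) simp

lemma norm2sq_nonneg: "norm2sq f \<ge> 0"
  unfolding norm2sq_def by (rule infsum_nonneg) simp

lemma has_bochner_integral_total_weight_deviation_sq:
  assumes ac: "abs_cont p q" and sq: "integrable q (\<lambda>x. (imp_weight p q x)^2)" and N: "N > 0"
  shows "has_bochner_integral (replicate_pmf N q) (\<lambda>xs. (1 - total_weight p q xs / real N)^2)
           (chi2 p q / real N)"
proof -
  have "has_bochner_integral (replicate_pmf N q) (\<lambda>xs. (1 + (- 1 / real N) * total_weight p q xs)^2)
      (1^2 + 2 * 1 * (- 1 / real N) * (real N * 1)
        + (- 1 / real N)^2 * (real N * (1 + chi2 p q) + real N * (real N - 1) * 1^2))"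
    unfolding total_weight_def
    by (intro has_bochner_integral_affine_sq has_bochner_integral_sum_list_replicate_pmf
        has_bochner_integral_sum_list_sq_replicate_pmf imp_weight_nonneg
        has_bochner_integral_imp_weight[OF ac] has_bochner_integral_imp_weight_sq[OF ac sq])
  moreover have "1^2 + 2 * 1 * (- 1 / real N) * (real N * 1)
      + (- 1 / real N)^2 * (real N * (1 + chi2 p q) + real N * (real N - 1) * 1^2) = chi2 p q / real N"
    using N by (simp add: field_simps power2_eq_square)
  moreover have "1 + (- 1 / real N) * total_weight p q xs = 1 - total_weight p q xs / real N" for xs
    by simp
  ultimately show ?thesis
    by simp
qed

lemma has_bochner_integral_weight_at_deviation_sq:
  assumes ac: "abs_cont p q" and N: "N > 0"
  shows "has_bochner_integral (replicate_pmf N q) (\<lambda>xs. (weight_at p q xs x / real N - pmf p x)^2)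
           ((pmf p x * imp_weight p q x - (pmf p x)^2) / real N)"
proof -
  have "has_bochner_integral (replicate_pmf N q) (\<lambda>xs. (- pmf p x + (1 / real N) * weight_at p q xs x)^2)
      ((- pmf p x)^2 + 2 * (- pmf p x) * (1 / real N) * (real N * pmf p x)
        + (1 / real N)^2 * (real N * (pmf p x * imp_weight p q x) + real N * (real N - 1) * (pmf p x)^2))"
    unfolding weight_at_def
    by (intro has_bochner_integral_affine_sq has_bochner_integral_sum_list_replicate_pmf
        has_bochner_integral_sum_list_sq_replicate_pmf
        has_bochner_integral_imp_weight_at[OF ac] has_bochner_integral_imp_weight_at_sq[OF ac])
      (simp_all add: imp_weight_nonneg)
  moreover have "(- pmf p x)^2 + 2 * (- pmf p x) * (1 / real N) * (real N * pmf p x)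
      + (1 / real N)^2 * (real N * (pmf p x * imp_weight p q x) + real N * (real N - 1) * (pmf p x)^2)
      = (pmf p x * imp_weight p q x - (pmf p x)^2) / real N"
    using N by (simp add: field_simps power2_eq_square)
  moreover have "- pmf p x + (1 / real N) * weight_at p q xs x = weight_at p q xs x / real N - pmf p x"
    for xs
    by simp
  ultimately show ?thesis
    by simp
qed

lemma bar_p_minus_pmf_eq:
  assumes ac: "abs_cont p q" and N: "N > 0"
  shows "bar_p p q N x - pmf p x = measure_pmf.expectation (replicate_pmf N q)
           (\<lambda>xs. hat_p p q xs x * (1 - total_weight p q xs / real N))"
proof -
  let ?M = "replicate_pmf N q"
  have "has_bochner_integral ?M (\<lambda>xs. weight_at p q xs x / real N) (real N * pmf p x / real N)"
    unfolding weight_at_def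
    by (intro has_bochner_integral_divide_zero has_bochner_integral_sum_list_replicate_pmf
        has_bochner_integral_imp_weight_at[OF ac]) (simp add: imp_weight_nonneg)
  then have "has_bochner_integral ?M (\<lambda>xs. hat_p p q xs x - weight_at p q xs x / real N)
      (bar_p p q N x - pmf p x)"
    using N integrable_hat_p
    by (auto simp: bar_p_def intro!: has_bochner_integral_diff has_bochner_integral_integrable)
  then have "bar_p p q N x - pmf p x
      = measure_pmf.expectation ?M (\<lambda>xs. hat_p p q xs x - weight_at p q xs x / real N)"
    by (simp add: has_bochner_integral_iff)
  also have "\<dots> = measure_pmf.expectation ?M (\<lambda>xs. hat_p p q xs x * (1 - total_weight p q xs / real N))"
    using N by (simp add: weight_at_eq_hat_p_mult_total_weight field_simps)
  finally show ?thesis .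
qed

lemma sum_abs_bar_p_minus_pmf_le:
  assumes ac: "abs_cont p q" and sq: "integrable q (\<lambda>x. (imp_weight p q x)^2)" and N: "N > 0"
    and F: "finite F"
  shows "(\<Sum>x\<in>F. \<bar>bar_p p q N x - pmf p x\<bar>) \<le> sqrt (chi2 p q / real N)"
proof -
  let ?M = "replicate_pmf N q"
  let ?Y = "\<lambda>xs. 1 - total_weight p q xs / real N"
  have Y_sq: "has_bochner_integral ?M (\<lambda>xs. (?Y xs)^2) (chi2 p q / real N)"
    by (rule has_bochner_integral_total_weight_deviation_sq[OF ac sq N])
  have Y: "integrable ?M ?Y"
    by (rule measure_pmf.square_integrable_imp_integrable)
      (use Y_sq in \<open>simp_all add: has_bochner_integral_iff\<close>)
  have integrable: "integrable ?M (\<lambda>xs. hat_p p q xs x * \<bar>?Y xs\<bar>)" for x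
  proof (rule Bochner_Integration.integrable_bound)
    show "integrable ?M (\<lambda>xs. \<bar>?Y xs\<bar>)"
      using Y by (rule integrable_abs)
    show "AE xs in ?M. norm (hat_p p q xs x * \<bar>?Y xs\<bar>) \<le> norm \<bar>?Y xs\<bar>"
      by (intro AE_I2) (simp add: abs_mult hat_p_nonneg hat_p_le_1 mult_left_le_one_le)
  qed simp
  have "(\<Sum>x\<in>F. \<bar>bar_p p q N x - pmf p x\<bar>)
      \<le> (\<Sum>x\<in>F. measure_pmf.expectation ?M (\<lambda>xs. hat_p p q xs x * \<bar>?Y xs\<bar>))"
  proof (rule sum_mono)
    fix x
    have "\<bar>bar_p p q N x - pmf p x\<bar>
        \<le> measure_pmf.expectation ?M (\<lambda>xs. \<bar>hat_p p q xs x * ?Y xs\<bar>)"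
      unfolding bar_p_minus_pmf_eq[OF ac N] by (rule integral_abs_bound)
    then show "\<bar>bar_p p q N x - pmf p x\<bar>
        \<le> measure_pmf.expectation ?M (\<lambda>xs. hat_p p q xs x * \<bar>?Y xs\<bar>)"
      by (simp add: abs_mult hat_p_nonneg)
  qed
  also have "\<dots> = measure_pmf.expectation ?M (\<lambda>xs. (\<Sum>x\<in>F. hat_p p q xs x) * \<bar>?Y xs\<bar>)"
    using integrable by (simp add: sum_distrib_right)
  also have "\<dots> \<le> measure_pmf.expectation ?M (\<lambda>xs. \<bar>?Y xs\<bar>)"
  proof (rule integral_mono)
    show "integrable ?M (\<lambda>xs. (\<Sum>x\<in>F. hat_p p q xs x) * \<bar>?Y xs\<bar>)"
      using integrable by (simp add: sum_distrib_right)
    show "integrable ?M (\<lambda>xs. \<bar>?Y xs\<bar>)"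
      using Y by (rule integrable_abs)
    show "(\<Sum>x\<in>F. hat_p p q xs x) * \<bar>?Y xs\<bar> \<le> \<bar>?Y xs\<bar>" for xs
      using sum_hat_p_le_1[OF F] by (simp add: mult_left_le_one_le sum_nonneg hat_p_nonneg)
  qed
  also have "\<dots> \<le> sqrt (chi2 p q / real N)"
    using measure_pmf.expectation_abs_le_sqrt_second_moment[of ?Y ?M] Y_sq
    by (simp add: has_bochner_integral_iff)
  finally show ?thesis .
qed

lemma norm1_bar_p_minus_pmf_le:
  assumes ac: "abs_cont p q" and sq: "integrable q (\<lambda>x. (imp_weight p q x)^2)" and N: "N > 0"
  shows "norm1 (\<lambda>x. bar_p p q N x - pmf p x) \<le> sqrt (chi2 p q / real N)"
  unfolding norm1_def
  by (rule infsum_le_if_finite_sums_le) (simp_all add: sum_abs_bar_p_minus_pmf_le[OF ac sq N])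

lemma norm2sq_bar_p_minus_pmf_le:
  assumes ac: "abs_cont p q" and sq: "integrable q (\<lambda>x. (imp_weight p q x)^2)" and N: "N > 0"
  shows "norm2sq (\<lambda>x. bar_p p q N x - pmf p x) \<le> chi2 p q / real N"
  unfolding norm2sq_def
proof (rule infsum_le_if_finite_sums_le)
  fix F :: "'a set"
  assume F: "finite F"
  have "(\<Sum>x\<in>F. (bar_p p q N x - pmf p x)^2) \<le> (\<Sum>x\<in>F. \<bar>bar_p p q N x - pmf p x\<bar>)^2"
    by (rule sum_power2_le_power2_sum_abs[OF F])
  also have "\<dots> \<le> (sqrt (chi2 p q / real N))^2"
    by (intro power_mono sum_abs_bar_p_minus_pmf_le[OF ac sq N F]) (simp add: sum_nonneg)
  also have "\<dots> = chi2 p q / real N"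
    by (simp add: chi2_nonneg)
  finally show "(\<Sum>x\<in>F. (bar_p p q N x - pmf p x)^2) \<le> chi2 p q / real N" .
qed simp

lemma hat_p_minus_pmf_sq_le:
  assumes N: "N > 0"
  shows "(hat_p p q xs x - pmf p x)^2
    \<le> 2 * (1 - total_weight p q xs / real N)^2 * hat_p p q xs x
      + 2 * (weight_at p q xs x / real N - pmf p x)^2"
proof -
  define h where "h = hat_p p q xs x"
  define Y where "Y = 1 - total_weight p q xs / real N"
  define D where "D = weight_at p q xs x / real N - pmf p x"
  have "h - pmf p x = h * Y + D"
    using N by (simp add: h_def Y_def D_def weight_at_eq_hat_p_mult_total_weight field_simps)
  then have "(h - pmf p x)^2 \<le> 2 * (h * Y)^2 + 2 * D^2"
    using zero_le_power2[of "h * Y - D"] by (simp add: power2_sum power2_diff)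
  also have "(h * Y)^2 \<le> Y^2 * h"
  proof -
    have "h * h \<le> h"
      unfolding h_def by (intro mult_left_le_one_le hat_p_nonneg hat_p_le_1)
    then have "Y^2 * (h * h) \<le> Y^2 * h"
      by (rule mult_left_mono) simp
    then show ?thesis
      by (simp add: power2_eq_square algebra_simps)
  qed
  finally show ?thesis
    by (simp add: h_def Y_def D_def)
qed

lemma ennreal_norm2sq_hat_p_minus_pmf_le:
  assumes N: "N > 0"
  shows "ennreal (norm2sq (\<lambda>x. hat_p p q xs x - pmf p x))
    \<le> ennreal (2 * (1 - total_weight p q xs / real N)^2)
      + 2 * (\<integral>\<^sup>+x. (weight_at p q xs x / real N - pmf p x)^2 \<partial>count_space UNIV)"
proof -
  define c where "c = 2 * (1 - total_weight p q xs / real N)^2"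
  define D where "D x = (weight_at p q xs x / real N - pmf p x)^2" for x
  have c_nonneg: "c \<ge> 0" and D_nonneg: "D x \<ge> 0" for x
    by (simp_all add: c_def D_def)
  have "ennreal (norm2sq (\<lambda>x. hat_p p q xs x - pmf p x))
      \<le> (\<integral>\<^sup>+x. (hat_p p q xs x - pmf p x)^2 \<partial>count_space UNIV)"
    unfolding norm2sq_def by (rule ennreal_infsum_le_nn_integral) simp
  also have "\<dots>
      \<le> (\<integral>\<^sup>+x. ennreal c * ennreal (hat_p p q xs x) + 2 * ennreal (D x) \<partial>count_space UNIV)"
  proof (rule nn_integral_mono)
    fix x
    have "ennreal ((hat_p p q xs x - pmf p x)^2) \<le> ennreal (c * hat_p p q xs x + 2 * D x)"
      using hat_p_minus_pmf_sq_le[OF N] by (intro ennreal_leI) (simp add: c_def D_def)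
    also have "\<dots> = ennreal (c * hat_p p q xs x) + ennreal (2 * D x)"
      using mult_nonneg_nonneg[OF c_nonneg hat_p_nonneg] D_nonneg[of x] by (intro ennreal_plus) simp_all
    also have "\<dots> = ennreal c * ennreal (hat_p p q xs x) + 2 * ennreal (D x)"
      by (simp add: ennreal_mult c_nonneg hat_p_nonneg D_nonneg)
    finally show "ennreal ((hat_p p q xs x - pmf p x)^2)
        \<le> ennreal c * ennreal (hat_p p q xs x) + 2 * ennreal (D x)" .
  qed
  also have "\<dots> = ennreal c * (\<integral>\<^sup>+x. hat_p p q xs x \<partial>count_space UNIV)
      + 2 * (\<integral>\<^sup>+x. D x \<partial>count_space UNIV)"
    by (simp add: nn_integral_add nn_integral_cmult)
  also have "\<dots> \<le> ennreal c + 2 * (\<integral>\<^sup>+x. D x \<partial>count_space UNIV)"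
    using mult_left_mono[OF nn_integral_hat_p_le_1, of "ennreal c" p q xs] by simp
  finally show ?thesis
    by (simp add: c_def D_def)
qed

lemma nn_integral_sum_weight_at_deviation_sq_le:
  fixes p q :: "'a::countable pmf"
  assumes ac: "abs_cont p q" and sq: "integrable q (\<lambda>x. (imp_weight p q x)^2)" and N: "N > 0"
  shows "(\<integral>\<^sup>+xs. \<integral>\<^sup>+x. (weight_at p q xs x / real N - pmf p x)^2
             \<partial>count_space UNIV \<partial>replicate_pmf N q)
    \<le> ennreal ((1 + chi2 p q) / real N)"
proof -
  let ?D = "\<lambda>xs x. (weight_at p q xs x / real N - pmf p x)^2"
  have "(\<integral>\<^sup>+xs. \<integral>\<^sup>+x. ?D xs x \<partial>count_space UNIV \<partial>replicate_pmf N q)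
      = (\<integral>\<^sup>+x. \<integral>\<^sup>+xs. ?D xs x \<partial>replicate_pmf N q \<partial>count_space UNIV)"
    by (rule nn_integral_count_space_nn_integral) simp_all
  also have "\<dots> = (\<integral>\<^sup>+x. (pmf p x * imp_weight p q x - (pmf p x)^2) / real N \<partial>count_space UNIV)"
    by (intro nn_integral_cong nn_integral_eq_if_has_bochner_integral
        has_bochner_integral_weight_at_deviation_sq[OF ac N]) simp
  also have "\<dots> \<le> (\<integral>\<^sup>+x. ennreal (1 / real N) * (pmf p x * imp_weight p q x) \<partial>count_space UNIV)"
    by (intro nn_integral_mono) (simp add: ennreal_leI divide_right_mono imp_weight_nonneg flip: ennreal_mult)
  also have "\<dots> = ennreal (1 / real N) * ennreal (1 + chi2 p q)"
    by (subst nn_integral_cmult) (simp_all add: nn_integral_pmf_mult_imp_weight[OF ac sq])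
  also have "\<dots> = ennreal ((1 + chi2 p q) / real N)"
    by (simp add: chi2_nonneg del: ennreal_plus flip: ennreal_mult)
  finally show ?thesis .
qed

lemma expectation_norm2sq_hat_p_minus_pmf_le:
  fixes p q :: "'a::countable pmf"
  assumes ac: "abs_cont p q" and sq: "integrable q (\<lambda>x. (imp_weight p q x)^2)" and N: "N > 0"
  shows "measure_pmf.expectation (replicate_pmf N q) (\<lambda>xs. norm2sq (\<lambda>x. hat_p p q xs x - pmf p x))
    \<le> (4 * chi2 p q + 2) / real N"
proof -
  let ?M = "replicate_pmf N q"
  have Y_sq: "(\<integral>\<^sup>+xs. 2 * (1 - total_weight p q xs / real N)^2 \<partial>?M)
      = ennreal (2 * (chi2 p q / real N))"
    by (intro nn_integral_eq_if_has_bochner_integral has_bochner_integral_mult_right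
        has_bochner_integral_total_weight_deviation_sq[OF ac sq N]) simp
  have "(\<integral>\<^sup>+xs. norm2sq (\<lambda>x. hat_p p q xs x - pmf p x) \<partial>?M)
      \<le> (\<integral>\<^sup>+xs. ennreal (2 * (1 - total_weight p q xs / real N)^2)
            + 2 * (\<integral>\<^sup>+x. (weight_at p q xs x / real N - pmf p x)^2 \<partial>count_space UNIV) \<partial>?M)"
    by (intro nn_integral_mono ennreal_norm2sq_hat_p_minus_pmf_le[OF N])
  also have "\<dots> = ennreal (2 * (chi2 p q / real N))
      + 2 * (\<integral>\<^sup>+xs. \<integral>\<^sup>+x. (weight_at p q xs x / real N - pmf p x)^2 \<partial>count_space UNIV \<partial>?M)"
    by (simp add: nn_integral_add nn_integral_cmult Y_sq)
  also have "\<dots> \<le> ennreal (2 * (chi2 p q / real N)) + 2 * ennreal ((1 + chi2 p q) / real N)"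
    by (intro add_left_mono mult_left_mono nn_integral_sum_weight_at_deviation_sq_le[OF ac sq N]) simp
  also have "\<dots> = ennreal (2 * (chi2 p q / real N) + 2 * ((1 + chi2 p q) / real N))"
    using ennreal_mult'[of 2 "(1 + chi2 p q) / real N"] by (simp add: chi2_nonneg)
  also have "\<dots> = ennreal ((4 * chi2 p q + 2) / real N)"
    using N by (simp add: field_simps)
  finally show ?thesis
    by (simp add: integral_eq_nn_integral norm2sq_nonneg chi2_nonneg enn2real_leI)
qed

theorem theorem1:
  fixes p q :: "('a::finite) list pmf"
  assumes "abs_cont p q"
    and "integrable (measure_pmf q) (\<lambda>x. (imp_weight p q x)^4)"
  shows "(\<lambda>N. norm1 (\<lambda>x. bar_p p q N x - pmf p x))
           \<in> O(\<lambda>N. sqrt ((1 + chi2 p q) / real N)) \<and>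
         (\<lambda>N. norm2sq (\<lambda>x. bar_p p q N x - pmf p x))
           \<in> O(\<lambda>N. (1 + chi2 p q) / real N) \<and>
         (\<lambda>N. measure_pmf.expectation (replicate_pmf N q)
                (\<lambda>xs. norm2sq (\<lambda>x. hat_p p q xs x - pmf p x)))
           \<in> O(\<lambda>N. (1 + chi2 p q) / real N)"
proof -
  note ac = assms(1)
  have sq: "integrable q (\<lambda>x. (imp_weight p q x)^2)"
    by (rule measure_pmf.square_integrable_imp_integrable) (use assms(2) in simp_all)
  have chi2_le: "chi2 p q / real N \<le> (1 + chi2 p q) / real N" for N
    by (simp add: divide_right_mono)
  have scaled_chi2_le: "(4 * chi2 p q + 2) / real N \<le> 4 * ((1 + chi2 p q) / real N)" for N
    by (simp add: divide_right_mono)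
  have "\<bar>norm1 (\<lambda>x. bar_p p q N x - pmf p x)\<bar> \<le> 1 * sqrt ((1 + chi2 p q) / real N)"
    if "N > 0" for N
    using order.trans[OF norm1_bar_p_minus_pmf_le[OF ac sq that] real_sqrt_le_mono[OF chi2_le]]
    by (simp add: norm1_nonneg)
  moreover have "\<bar>norm2sq (\<lambda>x. bar_p p q N x - pmf p x)\<bar> \<le> 1 * ((1 + chi2 p q) / real N)"
    if "N > 0" for N
    using order.trans[OF norm2sq_bar_p_minus_pmf_le[OF ac sq that] chi2_le]
    by (simp add: norm2sq_nonneg)
  moreover have "\<bar>measure_pmf.expectation (replicate_pmf N q)
        (\<lambda>xs. norm2sq (\<lambda>x. hat_p p q xs x - pmf p x))\<bar> \<le> 4 * ((1 + chi2 p q) / real N)"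
    if "N > 0" for N
    using order.trans[OF expectation_norm2sq_hat_p_minus_pmf_le[OF ac sq that] scaled_chi2_le]
    by (simp add: norm2sq_nonneg)
  ultimately show ?thesis
    by (intro conjI bigo_nat_if_bounded_for_pos)
qed

end
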